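(* Let $G$ be a graph and $x$ an arbitrary vertex of $G$. Then there exists a Grundy dominating sequence of $G$ that contains $x$.
   Context: For a graph $G$, $N[v]$ denotes the closed neighborhood of $v$. A sequence $(v_1,\ldots,v_k)$ of distinct vertices is a closed neighborhood sequence if $N[v_i]\setminus\bigcup_{j=1}^{i-1}N[v_j]\neq\emptyset$ for each $i\in[k]$. A Grundy dominating sequence is a closed neighborhood sequence of maximum possible length in $G$. *)

theory Defs
  imports Main
begin

definition graph :: "'a set \<Rightarrow> ('a \<Rightarrow> 'a \<Rightarrow> bool) \<Rightarrow> bool" where
  "graph V E \<longleftrightarrow> finite V \<and> (\<forall>u v. E u v \<longrightarrow> E v u) \<and> (\<forall>v. \<not> E v v)
     \<and> (\<forall>u v. E u v \<longrightarrow> u \<in> V \<and> v \<in> V)"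

definition closed_nbhd :: "'a set \<Rightarrow> ('a \<Rightarrow> 'a \<Rightarrow> bool) \<Rightarrow> 'a \<Rightarrow> 'a set" where
  "closed_nbhd V E v = {u \<in> V. u = v \<or> E v u}"

definition closed_nbhd_seq :: "'a set \<Rightarrow> ('a \<Rightarrow> 'a \<Rightarrow> bool) \<Rightarrow> 'a list \<Rightarrow> bool" where
  "closed_nbhd_seq V E vs \<longleftrightarrow> distinct vs \<and> set vs \<subseteq> V \<and>
     (\<forall>i < length vs. closed_nbhd V E (vs ! i) - (\<Union>j<i. closed_nbhd V E (vs ! j)) \<noteq> {})"

definition grundy_dominating_seq :: "'a set \<Rightarrow> ('a \<Rightarrow> 'a \<Rightarrow> bool) \<Rightarrow> 'a list \<Rightarrow> bool" where
  "grundy_dominating_seq V E vs \<longleftrightarrow> closed_nbhd_seq V E vs \<and>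
     (\<forall>ws. closed_nbhd_seq V E ws \<longrightarrow> length ws \<le> length vs)"

end

theory Submission
  imports Defs
begin

text \<open>Take a Grundy dominating sequence not containing \<open>x\<close>. By maximality it
  dominates \<open>N[x]\<close>, so some vertex \<open>v\<close> of it is the first one after which \<open>N[x]\<close>
  is dominated. Replacing \<open>v\<close> by \<open>x\<close> keeps the sequence legal: \<open>x\<close> still has a
  private neighbour at that position, and the set dominated by the prefix up
  to that position can only shrink, so every later vertex keeps its
  private neighbour.\<close>

definition dominated :: "'a set \<Rightarrow> ('a \<Rightarrow> 'a \<Rightarrow> bool) \<Rightarrow> 'a list \<Rightarrow> 'a set" where
  "dominated V E vs = (\<Union>v\<in>set vs. closed_nbhd V E v)"

lemma dominated_Nil [simp]: "dominated V E [] = {}"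
  and dominated_append [simp]: "dominated V E (us @ ws) = dominated V E us \<union> dominated V E ws"
  and dominated_singleton [simp]: "dominated V E [v] = closed_nbhd V E v"
  by (auto simp: dominated_def)

lemma dominated_conv_nth: "dominated V E vs = (\<Union>j<length vs. closed_nbhd V E (vs ! j))"
  unfolding dominated_def by (auto simp: in_set_conv_nth intro: nth_mem)

lemma closed_nbhd_seq_Nil: "closed_nbhd_seq V E []"
  by (simp add: closed_nbhd_seq_def)

lemma closed_nbhd_seq_snoc:
  "closed_nbhd_seq V E (vs @ [v]) \<longleftrightarrow>
     closed_nbhd_seq V E vs \<and> v \<in> V \<and> v \<notin> set vs \<and> \<not> closed_nbhd V E v \<subseteq> dominated V E vs"
proof -
  have prefix_nbhds: "(\<Union>j<i. closed_nbhd V E ((vs @ [v]) ! j)) = (\<Union>j<i. closed_nbhd V E (vs ! j))"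
    if "i \<le> length vs" for i
    using that by (auto simp: nth_append)
  show ?thesis
    unfolding closed_nbhd_seq_def dominated_conv_nth
    by (auto simp: less_Suc_eq all_conj_distrib prefix_nbhds nth_append)
qed

lemma closed_nbhd_seq_appendD: "closed_nbhd_seq V E (us @ ws) \<Longrightarrow> closed_nbhd_seq V E us"
  by (induction ws rule: rev_induct) (simp_all add: closed_nbhd_seq_snoc flip: append_assoc)

lemma closed_nbhd_seq_exchange_prefix:
  assumes "closed_nbhd_seq V E (us @ ws)" and "closed_nbhd_seq V E us'"
    and "dominated V E us' \<subseteq> dominated V E us" and "set us' \<inter> set ws = {}"
  shows "closed_nbhd_seq V E (us' @ ws)"
  using assms
proof (induction ws rule: rev_induct)
  case Nil
  then show ?case by simp
next
  case (snoc w ws)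
  have "closed_nbhd_seq V E ((us @ ws) @ [w])"
    using snoc.prems(1) by simp
  then have prefix: "closed_nbhd_seq V E (us @ ws)" and w: "w \<in> V" "w \<notin> set (us @ ws)"
    and not_dom: "\<not> closed_nbhd V E w \<subseteq> dominated V E us \<union> dominated V E ws"
    unfolding closed_nbhd_seq_snoc by simp_all
  have "closed_nbhd_seq V E (us' @ ws)"
    using snoc.IH[OF prefix] snoc.prems(2-4) by auto
  moreover have "w \<notin> set (us' @ ws)"
    using w snoc.prems(4) by auto
  moreover have "\<not> closed_nbhd V E w \<subseteq> dominated V E (us' @ ws)"
    using not_dom snoc.prems(3) by auto
  ultimately show ?case
    using w by (simp add: closed_nbhd_seq_snoc flip: append_assoc)
qed

lemma split_at_first_dominating_prefix:
  assumes "A \<noteq> {}" and "A \<subseteq> dominated V E vs"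
  shows "\<exists>us v ws. vs = us @ v # ws \<and> \<not> A \<subseteq> dominated V E us \<and> A \<subseteq> dominated V E (us @ [v])"
  using assms(2)
proof (induction vs rule: rev_induct)
  case Nil
  then show ?case using assms(1) by simp
next
  case (snoc w vs)
  show ?case
  proof (cases "A \<subseteq> dominated V E vs")
    case True
    then obtain us v ws where "vs = us @ v # ws" "\<not> A \<subseteq> dominated V E us" "A \<subseteq> dominated V E (us @ [v])"
      using snoc.IH by blast
    then show ?thesis by (intro exI[of _ us] exI[of _ v] exI[of _ "ws @ [w]"]) simp
  next
    case False
    then show ?thesis using snoc.prems by blast
  qed
qed

lemma grundy_dominating_seq_exists:
  assumes "finite V"
  shows "\<exists>vs. grundy_dominating_seq V E vs"
proof -
  have "length ws < card V + 1" if "closed_nbhd_seq V E ws" for ws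
  proof -
    have "distinct ws" "set ws \<subseteq> V"
      using that by (simp_all add: closed_nbhd_seq_def)
    then have "length ws \<le> card V"
      using card_mono[OF assms] distinct_card by metis
    then show ?thesis by simp
  qed
  then show ?thesis
    using ex_has_greatest_nat[of "closed_nbhd_seq V E" "[]" length "card V + 1"]
    by (auto simp: grundy_dominating_seq_def closed_nbhd_seq_Nil)
qed

lemma grundy_dominating_seq_dominates_nbhd:
  assumes "grundy_dominating_seq V E vs" and "x \<in> V" and "x \<notin> set vs"
  shows "closed_nbhd V E x \<subseteq> dominated V E vs"
proof (rule ccontr)
  assume "\<not> closed_nbhd V E x \<subseteq> dominated V E vs"
  with assms have "closed_nbhd_seq V E (vs @ [x])"
    by (simp add: closed_nbhd_seq_snoc grundy_dominating_seq_def)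
  with assms(1) show False
    unfolding grundy_dominating_seq_def by fastforce
qed

lemma closed_nbhd_seq_replace:
  assumes seq: "closed_nbhd_seq V E (us @ v # ws)" and "x \<in> V" and "x \<notin> set (us @ v # ws)"
    and "\<not> closed_nbhd V E x \<subseteq> dominated V E us"
    and "closed_nbhd V E x \<subseteq> dominated V E (us @ [v])"
  shows "closed_nbhd_seq V E (us @ x # ws)"
proof -
  have seq': "closed_nbhd_seq V E ((us @ [v]) @ ws)"
    using seq by simp
  then have "closed_nbhd_seq V E (us @ [x])"
    using closed_nbhd_seq_appendD[of V E us] assms(2-4) by (simp add: closed_nbhd_seq_snoc)
  moreover have "dominated V E (us @ [x]) \<subseteq> dominated V E (us @ [v])"
    using assms(5) by simp
  moreover have "set (us @ [x]) \<inter> set ws = {}"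
    using seq assms(3) by (auto simp: closed_nbhd_seq_def)
  ultimately have "closed_nbhd_seq V E ((us @ [x]) @ ws)"
    by (rule closed_nbhd_seq_exchange_prefix[OF seq'])
  then show ?thesis by simp
qed

theorem proposition4p1:
  fixes V :: "'a set" and E :: "'a \<Rightarrow> 'a \<Rightarrow> bool" and x :: 'a
  assumes "graph V E" and "x \<in> V"
  shows "\<exists>vs. grundy_dominating_seq V E vs \<and> x \<in> set vs"
proof -
  have "finite V"
    using assms(1) by (simp add: graph_def)
  then obtain vs where grundy: "grundy_dominating_seq V E vs"
    using grundy_dominating_seq_exists by blast
  show ?thesis
  proof (cases "x \<in> set vs")
    case True
    with grundy show ?thesis by blast
  next
    case False
    have "closed_nbhd V E x \<noteq> {}"
      using assms(2) by (auto simp: closed_nbhd_def)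
    moreover have "closed_nbhd V E x \<subseteq> dominated V E vs"
      using grundy_dominating_seq_dominates_nbhd[OF grundy assms(2) False] .
    ultimately obtain us v ws where vs: "vs = us @ v # ws"
      and not_dom: "\<not> closed_nbhd V E x \<subseteq> dominated V E us"
      and dom: "closed_nbhd V E x \<subseteq> dominated V E (us @ [v])"
      using split_at_first_dominating_prefix[of "closed_nbhd V E x" V E vs] by blast
    have "closed_nbhd_seq V E (us @ v # ws)"
      using grundy vs by (simp add: grundy_dominating_seq_def)
    then have "closed_nbhd_seq V E (us @ x # ws)"
      using assms(2) False not_dom dom unfolding vs by (rule closed_nbhd_seq_replace)
    then have "grundy_dominating_seq V E (us @ x # ws)"
      using grundy vs by (simp add: grundy_dominating_seq_def)
    then show ?thesis by auto
  qed
qed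

end
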